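(* LFI3 is a sublogic of LFI1: for every set of formulas $\Gamma$ and formula $\alpha$, if $\Gamma\vDash_{LFI3}\alpha$ then $\Gamma\vDash_{LFI1}\alpha$.
   Context: Formulas are built from a countable set of propositional variables using unary $\neg,\circ$ and binary $\land,\lor,\to$. On $\{0,1\}$ use Boolean $\land,\lor,\to,\sim$. Let $\mathbb{B}=\{x\in\{0,1\}^3: x_1\lor x_2=1,\ x_3\lor\sim(x_1\land x_2)=1\}=\{T,t,b,f,F\}$ with $T=(1,0,0)$, $t=(1,0,1)$, $b=(1,1,1)$, $f=(0,1,1)$, $F=(0,1,0)$. The LFI3 algebra on $\mathbb{B}$ has operations: $a\dot\land b=(a_1\land b_1,\ a_2\lor b_2,\ (\sim a_2\land b_3)\lor(a_3\land\sim b_2)\lor(a_3\land b_3))$; $a\dot\lor b=(a_1\lor b_1,\ a_2\land b_2,\ (\sim a_1\land b_3)\lor(a_3\land\sim b_1)\lor(a_3\land b_3))$; $a\dot\to b=(a_1\to b_1,\ b_2\land(\sim a_2\lor a_3),\ (\sim a_2\land b_3)\lor(\sim a_2\land a_3\land\sim b_1)\lor(a_3\land b_3)\lor(\sim a_1\land a_3\land\sim b_1))$; $\dot\neg a=(a_2,a_1,a_3)$; $\dot\circ a=(\sim(a_1\land a_2),a_3,a_3\land\sim(a_1\land a_2))$. Designated set $D=\{T,t,b\}$. $\vDash_{LFI3}$ is the consequence relation of this matrix (valuations are homomorphisms; $\Gamma\vDash\alpha$ iff every valuation designating all of $\Gamma$ designates $\alpha$). LFI1 is the three-valued matrix logic on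 $\{1,\frac12,0\}$ with designated set $\{1,\frac12\}$, $\land=\min$, $\lor=\max$ (order $0<\frac12<1$), $a\to c=1$ if $a=0$ and $a\to c=c$ otherwise, $\neg1=0$, $\neg\frac12=\frac12$, $\neg0=1$, $\circ1=\circ0=1$, $\circ\frac12=0$; $\vDash_{LFI1}$ is its matrix consequence relation. *)

theory Defs
  imports Main
begin

datatype fm = Var nat | Neg fm | Circ fm | Conj fm fm | Disj fm fm | Imp fm fm

type_synonym v3 = "bool \<times> bool \<times> bool"

definition BB :: "v3 set" where
  "BB = {(x1, x2, x3). (x1 \<or> x2) \<and> (x3 \<or> \<not> (x1 \<and> x2))}"

definition cT :: v3 where "cT = (True, False, False)"
definition ct :: v3 where "ct = (True, False, True)"
definition cb :: v3 where "cb = (True, True, True)"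
definition cf :: v3 where "cf = (False, True, True)"
definition cF :: v3 where "cF = (False, True, False)"

definition and3 :: "v3 \<Rightarrow> v3 \<Rightarrow> v3" where
  "and3 a b = (case a of (a1, a2, a3) \<Rightarrow> case b of (b1, b2, b3) \<Rightarrow>
     (a1 \<and> b1, a2 \<or> b2, (\<not> a2 \<and> b3) \<or> (a3 \<and> \<not> b2) \<or> (a3 \<and> b3)))"

definition or3 :: "v3 \<Rightarrow> v3 \<Rightarrow> v3" where
  "or3 a b = (case a of (a1, a2, a3) \<Rightarrow> case b of (b1, b2, b3) \<Rightarrow>
     (a1 \<or> b1, a2 \<and> b2, (\<not> a1 \<and> b3) \<or> (a3 \<and> \<not> b1) \<or> (a3 \<and> b3)))"

definition imp3 :: "v3 \<Rightarrow> v3 \<Rightarrow> v3" where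
  "imp3 a b = (case a of (a1, a2, a3) \<Rightarrow> case b of (b1, b2, b3) \<Rightarrow>
     (a1 \<longrightarrow> b1, b2 \<and> (\<not> a2 \<or> a3),
      (\<not> a2 \<and> b3) \<or> (\<not> a2 \<and> a3 \<and> \<not> b1) \<or> (a3 \<and> b3) \<or> (\<not> a1 \<and> a3 \<and> \<not> b1)))"

definition neg3 :: "v3 \<Rightarrow> v3" where
  "neg3 a = (case a of (a1, a2, a3) \<Rightarrow> (a2, a1, a3))"

definition circ3 :: "v3 \<Rightarrow> v3" where
  "circ3 a = (case a of (a1, a2, a3) \<Rightarrow> (\<not> (a1 \<and> a2), a3, a3 \<and> \<not> (a1 \<and> a2)))"

definition D3 :: "v3 set" where "D3 = {cT, ct, cb}"

fun eval3 :: "(nat \<Rightarrow> v3) \<Rightarrow> fm \<Rightarrow> v3" where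
  "eval3 v (Var n) = v n"
| "eval3 v (Neg a) = neg3 (eval3 v a)"
| "eval3 v (Circ a) = circ3 (eval3 v a)"
| "eval3 v (Conj a b) = and3 (eval3 v a) (eval3 v b)"
| "eval3 v (Disj a b) = or3 (eval3 v a) (eval3 v b)"
| "eval3 v (Imp a b) = imp3 (eval3 v a) (eval3 v b)"

text \<open>Valuations into the algebra on BB are exactly the homomorphic extensions
  of assignments of the variables into BB.\<close>
definition cons_LFI3 :: "fm set \<Rightarrow> fm \<Rightarrow> bool" where
  "cons_LFI3 \<Gamma> \<alpha> \<longleftrightarrow>
     (\<forall>v. (\<forall>n. v n \<in> BB) \<longrightarrow> (\<forall>\<gamma>\<in>\<Gamma>. eval3 v \<gamma> \<in> D3) \<longrightarrow> eval3 v \<alpha> \<in> D3)"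

datatype t3 = One | Half | Zero

fun rank :: "t3 \<Rightarrow> nat" where
  "rank Zero = 0" | "rank Half = 1" | "rank One = 2"

definition min1 :: "t3 \<Rightarrow> t3 \<Rightarrow> t3" where
  "min1 a b = (if rank a \<le> rank b then a else b)"
definition max1 :: "t3 \<Rightarrow> t3 \<Rightarrow> t3" where
  "max1 a b = (if rank a \<le> rank b then b else a)"
definition imp1 :: "t3 \<Rightarrow> t3 \<Rightarrow> t3" where
  "imp1 a c = (if a = Zero then One else c)"
fun neg1 :: "t3 \<Rightarrow> t3" where
  "neg1 One = Zero" | "neg1 Half = Half" | "neg1 Zero = One"
fun circ1 :: "t3 \<Rightarrow> t3" where
  "circ1 One = One" | "circ1 Half = Zero" | "circ1 Zero = One"

definition D1 :: "t3 set" where "D1 = {One, Half}"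

fun eval1 :: "(nat \<Rightarrow> t3) \<Rightarrow> fm \<Rightarrow> t3" where
  "eval1 v (Var n) = v n"
| "eval1 v (Neg a) = neg1 (eval1 v a)"
| "eval1 v (Circ a) = circ1 (eval1 v a)"
| "eval1 v (Conj a b) = min1 (eval1 v a) (eval1 v b)"
| "eval1 v (Disj a b) = max1 (eval1 v a) (eval1 v b)"
| "eval1 v (Imp a b) = imp1 (eval1 v a) (eval1 v b)"

definition cons_LFI1 :: "fm set \<Rightarrow> fm \<Rightarrow> bool" where
  "cons_LFI1 \<Gamma> \<alpha> \<longleftrightarrow>
     (\<forall>v. (\<forall>\<gamma>\<in>\<Gamma>. eval1 v \<gamma> \<in> D1) \<longrightarrow> eval1 v \<alpha> \<in> D1)"

end

theory Submission
  imports Defs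
begin

text \<open>The values \<open>T\<close>, \<open>b\<close>, \<open>F\<close> form a subalgebra of the LFI3 algebra, and
  \<open>1 \<mapsto> T\<close>, \<open>1/2 \<mapsto> b\<close>, \<open>0 \<mapsto> F\<close> is an isomorphism from the LFI1 algebra onto it
  that preserves and reflects designation. Composing an LFI1 valuation with this
  embedding therefore yields an LFI3 valuation designating exactly the same formulas,
  so every LFI1 countermodel is an LFI3 countermodel.\<close>

fun embed_LFI1 :: "t3 \<Rightarrow> v3" where
  "embed_LFI1 One = cT"
| "embed_LFI1 Half = cb"
| "embed_LFI1 Zero = cF"

lemma embed_LFI1_in_BB: "embed_LFI1 x \<in> BB"
  by (cases x) (auto simp: BB_def cT_def cb_def cF_def)

lemma embed_LFI1_in_D3_iff: "embed_LFI1 x \<in> D3 \<longleftrightarrow> x \<in> D1"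
  by (cases x) (auto simp: D3_def D1_def cT_def ct_def cb_def cF_def)

lemma neg3_embed_LFI1: "neg3 (embed_LFI1 x) = embed_LFI1 (neg1 x)"
  by (cases x) (auto simp: neg3_def cT_def cb_def cF_def)

lemma circ3_embed_LFI1: "circ3 (embed_LFI1 x) = embed_LFI1 (circ1 x)"
  by (cases x) (auto simp: circ3_def cT_def cb_def cF_def)

lemma and3_embed_LFI1: "and3 (embed_LFI1 x) (embed_LFI1 y) = embed_LFI1 (min1 x y)"
  by (cases x; cases y) (auto simp: and3_def min1_def cT_def cb_def cF_def)

lemma or3_embed_LFI1: "or3 (embed_LFI1 x) (embed_LFI1 y) = embed_LFI1 (max1 x y)"
  by (cases x; cases y) (auto simp: or3_def max1_def cT_def cb_def cF_def)

lemma imp3_embed_LFI1: "imp3 (embed_LFI1 x) (embed_LFI1 y) = embed_LFI1 (imp1 x y)"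
  by (cases x; cases y) (auto simp: imp3_def imp1_def cT_def cb_def cF_def)

lemma eval3_embed_LFI1: "eval3 (embed_LFI1 \<circ> v) a = embed_LFI1 (eval1 v a)"
  by (induction a)
    (simp_all add: neg3_embed_LFI1 circ3_embed_LFI1 and3_embed_LFI1
      or3_embed_LFI1 imp3_embed_LFI1)

lemma eval3_embed_LFI1_in_D3_iff: "eval3 (embed_LFI1 \<circ> v) a \<in> D3 \<longleftrightarrow> eval1 v a \<in> D1"
  by (simp add: eval3_embed_LFI1 embed_LFI1_in_D3_iff)

theorem theorem13:
  fixes \<Gamma> :: "fm set" and \<alpha> :: fm
  assumes "cons_LFI3 \<Gamma> \<alpha>"
  shows "cons_LFI1 \<Gamma> \<alpha>"
  unfolding cons_LFI1_def
proof (intro allI impI)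
  fix v
  assume "\<forall>\<gamma>\<in>\<Gamma>. eval1 v \<gamma> \<in> D1"
  then have "\<forall>\<gamma>\<in>\<Gamma>. eval3 (embed_LFI1 \<circ> v) \<gamma> \<in> D3"
    by (simp add: eval3_embed_LFI1_in_D3_iff)
  moreover have "\<forall>n. (embed_LFI1 \<circ> v) n \<in> BB"
    by (simp add: embed_LFI1_in_BB)
  ultimately have "eval3 (embed_LFI1 \<circ> v) \<alpha> \<in> D3"
    using assms unfolding cons_LFI3_def by blast
  then show "eval1 v \<alpha> \<in> D1"
    by (simp add: eval3_embed_LFI1_in_D3_iff)
qed

end
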